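(* Let $n\ge 1$ and let $T$ be a tree chosen uniformly at random among all labeled trees on the vertex set $\{1,\dots,n\}$. For a tree with vertex degrees $k_1,\dots,k_n$, let $\langle k^2\rangle=\frac{1}{n}\sum_{i=1}^n k_i^2$ and $E_0[C]=\frac{n}{6}\left(n-1-\langle k^2\rangle\right)$. Then \[ E\big[E_0[C]\big]=\frac{1}{6}(n-1)\left(n-5+\frac{6}{n}\right)=\frac{n^2}{6}-n+\frac{11}{6}-\frac{1}{n}, \] where the outer expectation is over the uniformly random labeled tree $T$.
   Context: For a tree on $n$ vertices, $E_0[C]=\frac{n}{6}(n-1-\langle k^2\rangle)$ is the expected number of pairs of edges that cross when the vertices are placed at positions $1,\dots,n$ by a uniformly random permutation (two edges $\{s,t\}$, $\{u,v\}$ cross iff exactly one of the positions of $s,t$ lies strictly between the positions of $u$ and $v$, the other lying strictly outside that interval). *)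

theory Defs
  imports Complex_Main
begin

definition simple_graph :: "'a set \<Rightarrow> 'a set set \<Rightarrow> bool" where
  "simple_graph V E \<longleftrightarrow> E \<subseteq> {{u, v} | u v. u \<in> V \<and> v \<in> V \<and> u \<noteq> v}"

definition graph_connected :: "'a set \<Rightarrow> 'a set set \<Rightarrow> bool" where
  "graph_connected V E \<longleftrightarrow>
     (\<forall>u\<in>V. \<forall>v\<in>V. (u, v) \<in> {(x, y). {x, y} \<in> E}\<^sup>*)"

definition is_cycle :: "'a set set \<Rightarrow> 'a list \<Rightarrow> bool" where
  "is_cycle E vs \<longleftrightarrow> length vs \<ge> 3 \<and> distinct vs \<and>
     (\<forall>i < length vs. {vs ! i, vs ! ((i + 1) mod length vs)} \<in> E)"

definition acyclic_graph :: "'a set set \<Rightarrow> bool" where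
  "acyclic_graph E \<longleftrightarrow> \<not> (\<exists>vs. is_cycle E vs)"

definition is_tree :: "'a set \<Rightarrow> 'a set set \<Rightarrow> bool" where
  "is_tree V E \<longleftrightarrow> simple_graph V E \<and> graph_connected V E \<and> acyclic_graph E"

definition labeled_trees :: "nat \<Rightarrow> nat set set set" where
  "labeled_trees n = {E. is_tree {1..n} E}"

definition degree :: "'a set set \<Rightarrow> 'a \<Rightarrow> nat" where
  "degree E v = card {e \<in> E. v \<in> e}"

definition second_moment_degree :: "nat \<Rightarrow> nat set set \<Rightarrow> real" where
  "second_moment_degree n E = (1 / real n) * (\<Sum>i = 1..n. (real (degree E i))^2)"

definition E0C :: "nat \<Rightarrow> nat set set \<Rightarrow> real" where
  "E0C n E = real n / 6 * (real n - 1 - second_moment_degree n E)"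

end

(*
  Fix a vertex v of degree d in a tree T on n vertices. An edge {x, y} not containing v,
  oriented so that deleting it separates y from v, can be swung to {v, y}: the result is
  again a tree, in which v has degree d + 1. Conversely an edge {v, y} can be swung back
  to {x, y} for any x on v's side of it. A tree has n - 1 - d moves of the first kind and
  (n - 1)(d - 1) of the second, and the moves of the two kinds are mutually inverse, so
  for every weight f the sum over all trees of (n - 1 - d) f(d) equals that of
  (n - 1)(d - 1) f(d - 1). The weights f = 1 and f(d) = d - 1 give two linear relations
  between the first two moments of d, whence the sum over all trees of d^2 is
  (n - 1)(5n - 6)/n^2 times their number; summing over v gives the average of E_0[C].
*)
theory Submission
  imports Defs
begin

definition reach :: "'a set set \<Rightarrow> 'a \<Rightarrow> 'a \<Rightarrow> bool" where
  "reach G a b \<longleftrightarrow> (a, b) \<in> {(x, y). {x, y} \<in> G}\<^sup>*"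

lemma reach_refl [simp]: "reach G a a"
  by (simp add: reach_def)

lemma reach_edge: "{a, b} \<in> G \<Longrightarrow> reach G a b"
  unfolding reach_def by (rule r_into_rtrancl) simp

lemma reach_trans: "reach G a b \<Longrightarrow> reach G b c \<Longrightarrow> reach G a c"
  unfolding reach_def by (rule rtrancl_trans)

lemma reach_sym:
  assumes "reach G a b" shows "reach G b a"
proof -
  have "sym {(x, y). {x, y} \<in> G}" by (auto simp: sym_def insert_commute)
  then show ?thesis using assms unfolding reach_def by (metis sym_rtrancl symD)
qed

lemma reach_mono: "reach G a b \<Longrightarrow> G \<subseteq> H \<Longrightarrow> reach H a b"
  unfolding reach_def by (erule rtrancl_mono[THEN subsetD, rotated]) auto

lemma reach_induct [consumes 1, case_names refl step]:
  assumes "reach G a b" "P a"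
    and "\<And>w w'. reach G a w \<Longrightarrow> {w, w'} \<in> G \<Longrightarrow> P w \<Longrightarrow> P w'"
  shows "P b"
  using assms(1) unfolding reach_def
proof (induction rule: rtrancl_induct)
  case base then show ?case using assms(2) .
next
  case (step y z) then show ?case using assms(3)[of y z] by (auto simp: reach_def)
qed

lemma reach_insert:
  assumes "reach (insert {p, q} G) a w"
  shows "reach G a w \<or> (reach G a p \<and> reach G q w) \<or> (reach G a q \<and> reach G p w)"
  using assms
proof (induction rule: reach_induct)
  case refl then show ?case by simp
next
  case (step w w')
  show ?case
  proof (cases "{w, w'} \<in> G")
    case True
    then show ?thesis using step.IH by (meson reach_edge reach_trans)
  next
    case False
    then have "(w = p \<and> w' = q) \<or> (w = q \<and> w' = p)"
      using step.hyps by (auto simp: doubleton_eq_iff)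
    then show ?thesis using step.IH by (auto intro: reach_sym)
  qed
qed

lemma reach_imp_incident:
  assumes "reach G a b" "a \<noteq> b" shows "\<exists>e\<in>G. b \<in> e"
proof -
  have "a = b \<or> (\<exists>e\<in>G. b \<in> e)" using assms(1)
    by (induction rule: reach_induct) auto
  then show ?thesis using assms(2) by simp
qed

lemma reach_first_edge:
  assumes "reach T v x" "x \<noteq> v"
  shows "\<exists>y. {v, y} \<in> T \<and> reach (T - {{v, y}}) y x"
proof -
  have "x = v \<or> (\<exists>y. {v, y} \<in> T \<and> reach (T - {{v, y}}) y x)"
    using assms(1)
  proof (induction rule: reach_induct)
    case (step w w')
    show ?case
    proof (cases "w = v")
      case True
      then show ?thesis using step.hyps(2) by auto
    next
      case False
      then obtain y where y: "{v, y} \<in> T" "reach (T - {{v, y}}) y w" using step.IH by blast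
      show ?thesis
      proof (cases "{w, w'} = {v, y}")
        case True
        then show ?thesis using False by (auto simp: doubleton_eq_iff)
      next
        case False
        then have "reach (T - {{v, y}}) w w'" using step.hyps(2) by (intro reach_edge) auto
        then show ?thesis using y(1) reach_trans[OF y(2)] by blast
      qed
    qed
  qed simp
  then show ?thesis using assms(2) by blast
qed

fun walk :: "'a set set \<Rightarrow> 'a list \<Rightarrow> bool" where
  "walk G [] = False"
| "walk G [x] = True"
| "walk G (x # y # xs) \<longleftrightarrow> {x, y} \<in> G \<and> walk G (y # xs)"

lemma walk_append: "walk G (xs @ w # ys) \<longleftrightarrow> walk G (xs @ [w]) \<and> walk G (w # ys)"
  by (induction xs rule: induct_list012) auto

lemma walk_iff_nth:
  "walk G xs \<longleftrightarrow> xs \<noteq> [] \<and> (\<forall>i. Suc i < length xs \<longrightarrow> {xs ! i, xs ! Suc i} \<in> G)"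
proof (induction G xs rule: walk.induct)
  case (3 G x y xs)
  have "(\<forall>i. Suc i < length (x # y # xs) \<longrightarrow> {(x # y # xs) ! i, (x # y # xs) ! Suc i} \<in> G)
    \<longleftrightarrow> {x, y} \<in> G \<and> (\<forall>i. Suc i < length (y # xs) \<longrightarrow> {(y # xs) ! i, (y # xs) ! Suc i} \<in> G)"
    by (auto simp: All_less_Suc2)
  then show ?case using "3.IH" by simp
qed auto

lemma reach_imp_walk:
  assumes "reach G a b" shows "\<exists>ps. walk G ps \<and> hd ps = a \<and> last ps = b"
  using assms
proof (induction rule: reach_induct)
  case refl then show ?case by (intro exI[of _ "[a]"]) simp
next
  case (step w w')
  then obtain ps where ps: "walk G ps" "hd ps = a" "last ps = w" by blast
  then obtain qs where qs: "ps = qs @ [w]"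
    by (metis append_butlast_last_id walk.simps(1))
  have "walk G (qs @ [w, w'])" using walk_append[of G qs w "[w']"] ps qs step by simp
  moreover have "hd (qs @ [w, w']) = a" using ps qs by (cases qs) auto
  ultimately show ?case by (intro exI[of _ "qs @ [w, w']"]) simp
qed

lemma reach_imp_distinct_walk:
  assumes "reach G a b" shows "\<exists>ps. walk G ps \<and> hd ps = a \<and> last ps = b \<and> distinct ps"
proof -
  let ?P = "\<lambda>ps. walk G ps \<and> hd ps = a \<and> last ps = b"
  obtain ps where ps: "?P ps" and shortest: "\<And>qs. ?P qs \<Longrightarrow> length ps \<le> length qs"
    using reach_imp_walk[OF assms] ex_has_least_nat[of ?P _ length] by blast
  have "distinct ps"
  proof (rule ccontr)
    assume "\<not> distinct ps"
    then obtain xs w ys zs where ps_eq: "ps = xs @ w # ys @ w # zs"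
      using not_distinct_decomp by fastforce
    have "walk G (xs @ w # zs)"
      using ps ps_eq walk_append[of G xs w "ys @ w # zs"] walk_append[of G "w # ys" w zs]
        walk_append[of G xs w zs] by auto
    moreover have "hd (xs @ w # zs) = a" using ps ps_eq by (cases xs) auto
    moreover have "last (xs @ w # zs) = b" using ps ps_eq by (cases zs) auto
    ultimately have "length ps \<le> length (xs @ w # zs)" using shortest by blast
    then show False using ps_eq by simp
  qed
  then show ?thesis using ps by blast
qed

definition all_bridges :: "'a set set \<Rightarrow> bool" where
  "all_bridges E \<longleftrightarrow> (\<forall>a b. {a, b} \<in> E \<longrightarrow> \<not> reach (E - {{a, b}}) a b)"

lemma cycle_reach_without_first_edge:
  assumes "is_cycle E vs"
  shows "reach (E - {{vs ! 0, vs ! 1}}) (vs ! 1) (vs ! 0)"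
proof -
  define m where "m = length vs"
  let ?G = "E - {{vs ! 0, vs ! 1}}"
  have m: "3 \<le> m" and cyc: "\<And>i. i < m \<Longrightarrow> {vs ! i, vs ! ((i + 1) mod m)} \<in> E"
    using assms unfolding is_cycle_def m_def by auto
  have inj: "vs ! i = vs ! j \<longleftrightarrow> i = j" if "i < m" "j < m" for i j
    using assms that nth_eq_iff_index_eq unfolding is_cycle_def m_def by blast
  have edge: "{vs ! i, vs ! ((i + 1) mod m)} \<in> ?G" if "1 \<le> i" "i < m" for i
  proof -
    have "(i + 1) mod m < m" "i = 1 \<Longrightarrow> (i + 1) mod m = 2" using m by auto
    then show ?thesis using cyc[of i] that m by (auto simp: doubleton_eq_iff inj)
  qed
  have "i < m \<Longrightarrow> reach ?G (vs ! 1) (vs ! i)" if "1 \<le> i" for i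
    using that
  proof (induction i rule: dec_induct)
    case (step i)
    then have "{vs ! i, vs ! Suc i} \<in> ?G" using edge[of i] by simp
    moreover have "reach ?G (vs ! 1) (vs ! i)" using step by simp
    ultimately show ?case by (meson reach_edge reach_trans)
  qed simp
  then have "reach ?G (vs ! 1) (vs ! (m - 1))" using m by simp
  moreover have "{vs ! (m - 1), vs ! 0} \<in> ?G" using edge[of "m - 1"] m by simp
  ultimately show ?thesis by (meson reach_edge reach_trans)
qed

lemma all_bridges_imp_acyclic:
  assumes "all_bridges E" shows "acyclic_graph E"
  unfolding acyclic_graph_def
proof
  assume "\<exists>vs. is_cycle E vs"
  then obtain vs where cycle: "is_cycle E vs" by blast
  then have "{vs ! 0, vs ! 1} \<in> E" unfolding is_cycle_def by force
  moreover have "reach (E - {{vs ! 0, vs ! 1}}) (vs ! 0) (vs ! 1)"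
    using cycle_reach_without_first_edge[OF cycle] by (rule reach_sym)
  ultimately show False using assms unfolding all_bridges_def by blast
qed

lemma acyclic_imp_all_bridges:
  assumes "simple_graph V E" "acyclic_graph E" shows "all_bridges E"
  unfolding all_bridges_def
proof (intro allI impI notI)
  fix a b assume ab: "{a, b} \<in> E" "reach (E - {{a, b}}) a b"
  have "a \<noteq> b" using assms(1) ab(1) unfolding simple_graph_def
    by (auto simp: doubleton_eq_iff)
  obtain ps where ps: "walk (E - {{a, b}}) ps" "hd ps = a" "last ps = b" "distinct ps"
    using reach_imp_distinct_walk[OF ab(2)] by blast
  have "length ps \<ge> 3"
  proof (rule ccontr)
    assume "\<not> length ps \<ge> 3"
    then show False using ps \<open>a \<noteq> b\<close>
      by (cases ps rule: remdups_adj.cases) (auto simp: Suc_le_eq)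
  qed
  \<comment> \<open>the path from a to b closes up with the edge {b, a}\<close>
  moreover have "{ps ! i, ps ! ((i + 1) mod length ps)} \<in> E" if "i < length ps" for i
  proof (cases "Suc i < length ps")
    case True
    then show ?thesis using ps(1) unfolding walk_iff_nth by auto
  next
    case False
    then have "i = length ps - 1" using that by simp
    moreover have "ps \<noteq> []" using that by auto
    ultimately have "ps ! i = b" "(i + 1) mod length ps = 0" "ps ! 0 = a"
      using ps(2,3) that by (auto simp: last_conv_nth hd_conv_nth)
    then show ?thesis using ab(1) by (simp add: insert_commute)
  qed
  ultimately have "is_cycle E ps" unfolding is_cycle_def using ps(4) by blast
  then show False using assms(2) unfolding acyclic_graph_def by blast
qed

lemma is_tree_iff_all_bridges:
  "is_tree V E \<longleftrightarrow> simple_graph V E \<and> (\<forall>u\<in>V. \<forall>w\<in>V. reach E u w) \<and> all_bridges E"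
  unfolding is_tree_def graph_connected_def reach_def[symmetric]
  using acyclic_imp_all_bridges all_bridges_imp_acyclic by blast

lemma tree_reach: "is_tree V T \<Longrightarrow> u \<in> V \<Longrightarrow> w \<in> V \<Longrightarrow> reach T u w"
  by (simp add: is_tree_iff_all_bridges)

lemma tree_bridge: "is_tree V T \<Longrightarrow> {a, b} \<in> T \<Longrightarrow> \<not> reach (T - {{a, b}}) a b"
  by (simp add: is_tree_iff_all_bridges all_bridges_def)

lemma tree_edge_cases:
  assumes "is_tree V T" "e \<in> T" obtains a b where "e = {a, b}" "a \<noteq> b" "a \<in> V" "b \<in> V"
  using assms unfolding is_tree_def simple_graph_def by blast

lemma tree_edge_endpoints:
  assumes "is_tree V T" "{a, b} \<in> T" shows "a \<noteq> b" "a \<in> V" "b \<in> V"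
  using assms by (auto elim!: tree_edge_cases simp: doubleton_eq_iff)

lemma finite_tree_edges: "finite V \<Longrightarrow> is_tree V T \<Longrightarrow> finite T"
  by (rule finite_subset[of _ "Pow V"]) (auto elim: tree_edge_cases)

lemma finite_trees: "finite V \<Longrightarrow> finite {T. is_tree V T}"
  by (rule finite_subset[of _ "Pow (Pow V)"]) (auto elim: tree_edge_cases)

lemma tree_edge_split:
  assumes "is_tree V T" "{x, y} \<in> T" "w \<in> V"
  shows "reach (T - {{x, y}}) x w \<or> reach (T - {{x, y}}) y w"
proof -
  have "reach T x w" using assms tree_edge_endpoints tree_reach by metis
  moreover have "T = insert {x, y} (T - {{x, y}})" using assms(2) by blast
  ultimately show ?thesis using reach_insert[of x y "T - {{x, y}}" x w] by auto
qed

lemma all_bridges_exchange: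
  assumes T: "all_bridges T" and pq: "{p, q} \<in> T" and nr: "\<not> reach (T - {{p, q}}) r q"
  shows "all_bridges (insert {r, q} (T - {{p, q}}))"
  unfolding all_bridges_def
proof (intro allI impI notI)
  let ?G = "T - {{p, q}}"
  let ?T' = "insert {r, q} ?G"
  fix a b assume ab: "{a, b} \<in> ?T'" and rab: "reach (?T' - {{a, b}}) a b"
  show False
  proof (cases "{a, b} = {r, q}")
    case True
    have "reach ?G a b" using rab by (rule reach_mono) (use True in blast)
    moreover have "a = r \<and> b = q \<or> a = q \<and> b = r" using True by (auto simp: doubleton_eq_iff)
    ultimately show False using nr reach_sym by metis
  next
    case False
    let ?H = "?G - {{a, b}}"
    have abG: "{a, b} \<in> ?G" using ab False by blast
    then have "\<not> reach (T - {{a, b}}) a b" using T unfolding all_bridges_def by blast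
    then have no_ab: "\<not> reach ?H a b" using reach_mono[of ?H a b "T - {{a, b}}"] by blast
    have "?T' - {{a, b}} = insert {r, q} ?H" using False by blast
    then have "reach ?H a r \<and> reach ?H q b \<or> reach ?H a q \<and> reach ?H r b"
      using reach_insert[of r q ?H a b] rab no_ab by auto
    then have "reach ?G a r \<and> reach ?G q b \<or> reach ?G a q \<and> reach ?G r b"
      using reach_mono[of ?H _ _ ?G] by blast
    then have "reach ?G r q"
      using reach_edge[OF abG] reach_sym[of ?G] reach_trans[of ?G] by metis
    then show False using nr by simp
  qed
qed

lemma all_bridges_first_edge_unique:
  assumes T: "all_bridges T"
    and y1: "{v, y1} \<in> T" "reach (T - {{v, y1}}) y1 x"
    and y2: "{v, y2} \<in> T" "reach (T - {{v, y2}}) y2 x"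
  shows "y1 = y2"
proof (rule ccontr)
  assume "y1 \<noteq> y2"
  let ?e1 = "{v, y1}" and ?e2 = "{v, y2}"
  let ?H = "T - {?e1} - {?e2}"
  have "?e1 \<noteq> ?e2" using \<open>y1 \<noteq> y2\<close> by (auto simp: doubleton_eq_iff)
  have b1: "\<not> reach (T - {?e1}) v y1" and b2: "\<not> reach (T - {?e2}) v y2"
    using T y1(1) y2(1) unfolding all_bridges_def by blast+
  have "reach (T - {?e1}) v y2" using y2(1) \<open>?e1 \<noteq> ?e2\<close> by (intro reach_edge) auto
  have no_vx: "\<not> reach (T - {?e1}) v x"
    using b1 reach_trans[OF _ reach_sym[OF y1(2)]] by blast
  then have no_y2x: "\<not> reach (T - {?e1}) y2 x"
    using reach_trans[OF \<open>reach (T - {?e1}) v y2\<close>] by blast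
  have "T - {?e2} = insert ?e1 ?H" using y1(1) \<open>?e1 \<noteq> ?e2\<close> by blast
  then have "reach ?H y2 x \<or> reach ?H y2 v \<or> reach ?H v x"
    using reach_insert[of v y1 ?H y2 x] y2(2) by auto
  moreover have "?H \<subseteq> T - {?e1}" "?H \<subseteq> T - {?e2}" by blast+
  ultimately show False
    using no_vx no_y2x b2 reach_mono[of ?H] reach_sym[of "T - {?e2}" y2 v] by blast
qed

lemma tree_exchange:
  assumes T: "is_tree V T" and pq: "{p, q} \<in> T" and r: "r \<in> V"
    and nr: "\<not> reach (T - {{p, q}}) r q"
  shows "is_tree V (insert {r, q} (T - {{p, q}}))"
  unfolding is_tree_iff_all_bridges
proof (intro conjI)
  let ?G = "T - {{p, q}}"
  let ?T' = "insert {r, q} ?G"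
  have "q \<in> V" "r \<noteq> q" using tree_edge_endpoints[OF T pq] nr by auto
  then show "simple_graph V ?T'"
    using T r unfolding is_tree_def simple_graph_def by blast
  have "reach ?G p r" using tree_edge_split[OF T pq r] nr reach_sym by metis
  then have "reach ?T' p q" by (meson insertI1 reach_edge reach_mono reach_trans subset_insertI)
  then have "reach ?T' p w" if "w \<in> V" for w
    using tree_edge_split[OF T pq that] by (meson reach_mono reach_trans subset_insertI)
  then show "\<forall>u\<in>V. \<forall>w\<in>V. reach ?T' u w" by (meson reach_sym reach_trans)
  show "all_bridges ?T'"
    using T pq nr by (intro all_bridges_exchange) (simp_all add: is_tree_iff_all_bridges)
qed

lemma tree_neighbour_towards:
  assumes "is_tree V T" "v \<in> V" "x \<in> V" "x \<noteq> v"
  shows "\<exists>!y. {v, y} \<in> T \<and> reach (T - {{v, y}}) y x"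
  using reach_first_edge[OF tree_reach[OF assms(1-3)] assms(4)]
    all_bridges_first_edge_unique assms(1) by (auto simp: is_tree_iff_all_bridges)

lemma star_is_tree:
  assumes n: "1 \<le> n"
  shows "is_tree {1..n} {{1, i} | i. i \<in> {2..(n::nat)}}"
  unfolding is_tree_iff_all_bridges
proof (intro conjI)
  let ?S = "{{1, i} | i. i \<in> {2..n}}"
  show "simple_graph {1..n} ?S" unfolding simple_graph_def by force
  have from_1: "reach ?S 1 u" if "u \<in> {1..n}" for u
  proof (cases "u = 1")
    case False
    then have "{1, u} \<in> ?S" using that by auto
    then show ?thesis by (rule reach_edge)
  qed simp
  show "\<forall>u\<in>{1..n}. \<forall>w\<in>{1..n}. reach ?S u w"
  proof (intro ballI)
    fix u w assume "u \<in> {1..n}" "w \<in> {1..n}"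
    then show "reach ?S u w" using reach_trans[OF reach_sym[OF from_1] from_1] by simp
  qed
  show "all_bridges ?S"
    unfolding all_bridges_def
  proof (intro allI impI notI)
    fix a b assume ab: "{a, b} \<in> ?S" and rab: "reach (?S - {{a, b}}) a b"
    from ab obtain i where i: "{a, b} = {1, i}" "i \<in> {2..n}" by blast
    have "reach (?S - {{1, i}}) a b" using rab i(1) by simp
    moreover have "a = 1 \<and> b = i \<or> a = i \<and> b = 1" using i(1) by (auto simp: doubleton_eq_iff)
    ultimately have "reach (?S - {{1, i}}) 1 i" using reach_sym by (elim disjE conjE) simp_all
    \<comment> \<open>but i is a leaf, and its only edge was removed\<close>
    then obtain e where "e \<in> ?S - {{1, i}}" "i \<in> e" using reach_imp_incident i(2) by fastforce
    then show False using i(2) by auto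
  qed
qed

lemma card_neighbours:
  assumes "simple_graph V T" shows "card {y. {v, y} \<in> T} = degree T v"
  unfolding degree_def
proof (rule bij_betw_same_card[of "\<lambda>y. {v, y}"], rule bij_betwI')
  fix e assume e: "e \<in> {e \<in> T. v \<in> e}"
  then obtain a b where "e = {a, b}" using assms unfolding simple_graph_def by blast
  then show "\<exists>y\<in>{y. {v, y} \<in> T}. e = {v, y}"
    using e by (cases "a = v") (auto simp: insert_commute)
qed (auto simp: doubleton_eq_iff)

lemma degree_exchange:
  assumes "finite T" "{v, y} \<notin> T" "v \<noteq> x" "v \<noteq> y"
  shows "degree (insert {v, y} (T - {{x, y}})) v = Suc (degree T v)"
proof -
  have "{e \<in> insert {v, y} (T - {{x, y}}). v \<in> e} = insert {v, y} {e \<in> T. v \<in> e}"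
    using assms(3,4) by auto
  then show ?thesis unfolding degree_def using assms(1,2) by simp
qed

text \<open>A pair (x, y) in moves_to T v is an edge {x, y} that may be replaced by {v, y}
  without leaving the trees; moves_from V T v contains the inverse replacements of an
  edge {v, y} by {x, y}.\<close>

definition moves_to :: "'a set set \<Rightarrow> 'a \<Rightarrow> ('a \<times> 'a) set" where
  "moves_to T v = {(x, y). {x, y} \<in> T \<and> x \<noteq> v \<and> y \<noteq> v \<and> \<not> reach (T - {{x, y}}) v y}"

definition moves_from :: "'a set \<Rightarrow> 'a set set \<Rightarrow> 'a \<Rightarrow> ('a \<times> 'a) set" where
  "moves_from V T v = {(x, y). {v, y} \<in> T \<and> x \<in> V \<and> x \<noteq> v \<and> \<not> reach (T - {{v, y}}) x y}"

lemma tree_moves_to_iff: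
  assumes T: "is_tree V T" and v: "v \<in> V"
  shows "(x, y) \<in> moves_to T v \<longleftrightarrow>
    {y, x} \<in> T \<and> y \<noteq> v \<and> {v, y} \<notin> T \<and> reach (T - {{y, x}}) x v"
proof
  assume xy: "(x, y) \<in> moves_to T v"
  then have e: "{x, y} \<in> T" and "x \<noteq> v" "y \<noteq> v" and no_vy: "\<not> reach (T - {{x, y}}) v y"
    unfolding moves_to_def by auto
  then have "{v, y} \<notin> T" using reach_edge[of v y "T - {{x, y}}"] by (auto simp: doubleton_eq_iff)
  moreover have "reach (T - {{x, y}}) x v"
    using tree_edge_split[OF T e v] no_vy reach_sym[of "T - {{x, y}}" y v] by blast
  ultimately show "{y, x} \<in> T \<and> y \<noteq> v \<and> {v, y} \<notin> T \<and> reach (T - {{y, x}}) x v"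
    using e \<open>y \<noteq> v\<close> by (simp add: insert_commute)
next
  assume "{y, x} \<in> T \<and> y \<noteq> v \<and> {v, y} \<notin> T \<and> reach (T - {{y, x}}) x v"
  then have e: "{x, y} \<in> T" and "y \<noteq> v" "{v, y} \<notin> T" and xv: "reach (T - {{x, y}}) x v"
    by (simp_all add: insert_commute)
  then have "x \<noteq> v" by auto
  moreover have "\<not> reach (T - {{x, y}}) v y"
    using tree_bridge[OF T e] reach_trans[OF xv] by blast
  ultimately show "(x, y) \<in> moves_to T v" using e \<open>y \<noteq> v\<close> unfolding moves_to_def by simp
qed

lemma card_moves_to:
  assumes T: "is_tree V T" and "finite V" and v: "v \<in> V"
  shows "card (moves_to T v) + degree T v + 1 = card V"
proof -
  let ?N = "{y. {v, y} \<in> T}"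
  \<comment> \<open>each vertex y other than v carries exactly one edge {y, x} leading towards v\<close>
  have "bij_betw snd (moves_to T v) (V - insert v ?N)"
  proof (rule bij_betw_imageI)
    show "inj_on snd (moves_to T v)"
    proof (rule inj_onI)
      fix p q assume "p \<in> moves_to T v" "q \<in> moves_to T v" "snd p = snd q"
      moreover obtain x y x' where "p = (x, y)" "q = (x', y)"
        using \<open>snd p = snd q\<close> by (metis prod.collapse)
      ultimately have "{y, x} \<in> T" "reach (T - {{y, x}}) x v" "{y, x'} \<in> T"
        "reach (T - {{y, x'}}) x' v" "y \<in> V" "y \<noteq> v"
        using tree_edge_endpoints(1,2)[OF T] by (auto simp: tree_moves_to_iff[OF T v])
      then show "p = q"
        using tree_neighbour_towards[OF T \<open>y \<in> V\<close> v] \<open>p = (x, y)\<close> \<open>q = (x', y)\<close> by auto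
    qed
    show "snd ` moves_to T v = V - insert v ?N"
    proof (intro equalityI subsetI)
      fix y assume "y \<in> snd ` moves_to T v"
      then show "y \<in> V - insert v ?N"
        using tree_edge_endpoints(2)[OF T] by (force simp: tree_moves_to_iff[OF T v])
    next
      fix y assume y: "y \<in> V - insert v ?N"
      then obtain x where "{y, x} \<in> T" "reach (T - {{y, x}}) x v"
        using tree_neighbour_towards[OF T _ v, of y] by blast
      then have "(x, y) \<in> moves_to T v" using y by (simp add: tree_moves_to_iff[OF T v])
      then show "y \<in> snd ` moves_to T v" by force
    qed
  qed
  then have "card (moves_to T v) = card (V - insert v ?N)" by (rule bij_betw_same_card)
  moreover have sub: "insert v ?N \<subseteq> V" using tree_edge_endpoints(3)[OF T] v by blast
  then have "card (V - insert v ?N) + card (insert v ?N) = card V"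
    using card_Diff_subset[OF finite_subset[OF sub \<open>finite V\<close>] sub] card_mono[OF \<open>finite V\<close> sub]
    by linarith
  moreover have "card (insert v ?N) = degree T v + 1"
  proof -
    have "v \<notin> ?N" using tree_edge_endpoints(1)[OF T] by blast
    moreover have "finite ?N" using finite_subset[OF sub \<open>finite V\<close>] by simp
    moreover have "card ?N = degree T v"
      using T card_neighbours[of V T v] unfolding is_tree_def by blast
    ultimately show ?thesis by simp
  qed
  ultimately show ?thesis by simp
qed

lemma card_moves_from:
  assumes T: "is_tree V T" and "finite V" and v: "v \<in> V"
  shows "card (moves_from V T v) = (card V - 1) * (degree T v - 1)"
proof -
  let ?N = "{y. {v, y} \<in> T}"
  have "finite ?N" using tree_edge_endpoints(3)[OF T] \<open>finite V\<close> by (blast intro: finite_subset)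
  \<comment> \<open>for fixed x, all neighbours y of v qualify except the one leading towards x\<close>
  have "card {y \<in> ?N. \<not> reach (T - {{v, y}}) x y} = card ?N - 1" if x: "x \<in> V - {v}" for x
  proof -
    obtain y0 where "{v, y0} \<in> T" "reach (T - {{v, y0}}) y0 x"
      and "\<And>y. {v, y} \<in> T \<Longrightarrow> reach (T - {{v, y}}) y x \<Longrightarrow> y = y0"
      using tree_neighbour_towards[OF T v, of x] x by blast
    moreover have "reach (T - {{v, y}}) x y \<longleftrightarrow> reach (T - {{v, y}}) y x" for y
      using reach_sym by metis
    ultimately have "{y \<in> ?N. \<not> reach (T - {{v, y}}) x y} = ?N - {y0}" by blast
    moreover have "y0 \<in> ?N" using \<open>{v, y0} \<in> T\<close> by simp
    ultimately show ?thesis using \<open>finite ?N\<close> by simp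
  qed
  moreover have "moves_from V T v = (SIGMA x:V - {v}. {y \<in> ?N. \<not> reach (T - {{v, y}}) x y})"
    unfolding moves_from_def by auto
  moreover have "card ?N = degree T v"
    using T card_neighbours[of V T v] unfolding is_tree_def by blast
  ultimately show ?thesis using \<open>finite V\<close> \<open>finite ?N\<close> v by (simp add: card_SigmaI)
qed

lemma moves_to_exchange:
  assumes T: "is_tree V T" and v: "v \<in> V" and xy: "(x, y) \<in> moves_to T v"
  shows "is_tree V (insert {v, y} (T - {{x, y}}))"
    and "(x, y) \<in> moves_from V (insert {v, y} (T - {{x, y}})) v"
    and "{v, y} \<notin> T"
proof -
  have e: "{x, y} \<in> T" and "x \<noteq> v" "y \<noteq> v" and no_vy: "\<not> reach (T - {{x, y}}) v y"
    using xy unfolding moves_to_def by auto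
  show "is_tree V (insert {v, y} (T - {{x, y}}))" by (rule tree_exchange[OF T e v no_vy])
  have sub: "insert {v, y} (T - {{x, y}}) - {{v, y}} \<subseteq> T - {{x, y}}" by blast
  have "\<not> reach (insert {v, y} (T - {{x, y}}) - {{v, y}}) x y"
    using tree_bridge[OF T e] reach_mono[OF _ sub] by blast
  then show "(x, y) \<in> moves_from V (insert {v, y} (T - {{x, y}})) v"
    using tree_edge_endpoints(2)[OF T e] \<open>x \<noteq> v\<close> unfolding moves_from_def by simp
  show "{v, y} \<notin> T" using xy by (simp add: tree_moves_to_iff[OF T v])
qed

lemma moves_from_exchange:
  assumes T: "is_tree V T" and v: "v \<in> V" and xy: "(x, y) \<in> moves_from V T v"
  shows "is_tree V (insert {x, y} (T - {{v, y}}))"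
    and "(x, y) \<in> moves_to (insert {x, y} (T - {{v, y}})) v"
    and "{x, y} \<notin> T"
proof -
  have e: "{v, y} \<in> T" and "x \<in> V" "x \<noteq> v" and no_xy: "\<not> reach (T - {{v, y}}) x y"
    using xy unfolding moves_from_def by auto
  show "is_tree V (insert {x, y} (T - {{v, y}}))" by (rule tree_exchange[OF T e \<open>x \<in> V\<close> no_xy])
  have sub: "insert {x, y} (T - {{v, y}}) - {{x, y}} \<subseteq> T - {{v, y}}" by blast
  have "\<not> reach (insert {x, y} (T - {{v, y}}) - {{x, y}}) v y"
    using tree_bridge[OF T e] reach_mono[OF _ sub] by blast
  then show "(x, y) \<in> moves_to (insert {x, y} (T - {{v, y}})) v"
    using tree_edge_endpoints(1)[OF T e] \<open>x \<noteq> v\<close> unfolding moves_to_def by auto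
  have "{x, y} \<noteq> {v, y}" using \<open>x \<noteq> v\<close> by (auto simp: doubleton_eq_iff)
  then show "{x, y} \<notin> T" using no_xy reach_edge[of x y "T - {{v, y}}"] by blast
qed

lemma bij_betw_moves:
  assumes v: "v \<in> V"
  shows "bij_betw (\<lambda>(T, x, y). (insert {v, y} (T - {{x, y}}), x, y))
    (SIGMA T:{T. is_tree V T}. moves_to T v) (SIGMA T:{T. is_tree V T}. moves_from V T v)"
    (is "bij_betw ?f ?S ?R")
proof (rule bij_betw_byWitness[where f' = "\<lambda>(T, x, y). (insert {x, y} (T - {{v, y}}), x, y)"])
  let ?g = "\<lambda>(T, x, y). (insert {x, y} (T - {{v, y}}), x, y)"
  show "\<forall>s\<in>?S. ?g (?f s) = s"
  proof
    fix s assume "s \<in> ?S"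
    then obtain T x y where s: "s = (T, x, y)" "is_tree V T" "(x, y) \<in> moves_to T v" by auto
    then have "{x, y} \<in> T" "x \<noteq> v" "{v, y} \<notin> T"
      using moves_to_exchange(3)[OF s(2) v s(3)] unfolding moves_to_def by simp_all
    moreover have "{x, y} \<noteq> {v, y}" using \<open>x \<noteq> v\<close> by (auto simp: doubleton_eq_iff)
    ultimately have "insert {x, y} (insert {v, y} (T - {{x, y}}) - {{v, y}}) = T" by blast
    then show "?g (?f s) = s" using s(1) by simp
  qed
  show "\<forall>s\<in>?R. ?f (?g s) = s"
  proof
    fix s assume "s \<in> ?R"
    then obtain T x y where s: "s = (T, x, y)" "is_tree V T" "(x, y) \<in> moves_from V T v" by auto
    then have "{v, y} \<in> T" "x \<noteq> v" "{x, y} \<notin> T"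
      using moves_from_exchange(3)[OF s(2) v s(3)] unfolding moves_from_def by simp_all
    moreover have "{x, y} \<noteq> {v, y}" using \<open>x \<noteq> v\<close> by (auto simp: doubleton_eq_iff)
    ultimately have "insert {v, y} (insert {x, y} (T - {{v, y}}) - {{x, y}}) = T" by blast
    then show "?f (?g s) = s" using s(1) by simp
  qed
  show "?f ` ?S \<subseteq> ?R"
  proof
    fix s assume "s \<in> ?f ` ?S"
    then obtain T x y where "s = ?f (T, x, y)" "is_tree V T" "(x, y) \<in> moves_to T v" by auto
    then show "s \<in> ?R" using moves_to_exchange(1,2)[OF _ v] by simp
  qed
  show "?g ` ?R \<subseteq> ?S"
  proof
    fix s assume "s \<in> ?g ` ?R"
    then obtain T x y where "s = ?g (T, x, y)" "is_tree V T" "(x, y) \<in> moves_from V T v" by auto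
    then show "s \<in> ?S" using moves_from_exchange(1,2)[OF _ v] by simp
  qed
qed

lemma sum_moves_to_eq_sum_moves_from:
  fixes h :: "nat \<Rightarrow> real"
  assumes fin: "finite V" and v: "v \<in> V"
  shows "(\<Sum>T | is_tree V T. card (moves_to T v) * h (degree T v))
       = (\<Sum>T | is_tree V T. card (moves_from V T v) * h (degree T v - 1))"
proof -
  let ?Tr = "{T. is_tree V T}"
  let ?f = "\<lambda>(T, x, y). (insert {v, y} (T - {{x, y}}), x, y)"
  have "moves_to T v \<subseteq> V \<times> V" "moves_from V T v \<subseteq> V \<times> V" if "is_tree V T" for T
    using tree_edge_endpoints[OF that] unfolding moves_to_def moves_from_def by auto
  then have fin_moves: "finite (moves_to T v)" "finite (moves_from V T v)" if "T \<in> ?Tr" for T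
    using that fin by (simp_all add: finite_subset[of _ "V \<times> V"])
  have "(\<Sum>T\<in>?Tr. card (moves_to T v) * h (degree T v))
      = (\<Sum>(T, p) \<in> (SIGMA T:?Tr. moves_to T v). h (degree T v))"
    using finite_trees[OF fin] fin_moves by (simp add: sum.Sigma[symmetric])
  also have "\<dots> = (\<Sum>s \<in> (SIGMA T:?Tr. moves_to T v). (\<lambda>(T, p). h (degree T v - 1)) (?f s))"
  proof (rule sum.cong[OF refl])
    fix s assume "s \<in> (SIGMA T:?Tr. moves_to T v)"
    then obtain T x y where s: "s = (T, x, y)" "is_tree V T" "(x, y) \<in> moves_to T v" by auto
    have "degree (insert {v, y} (T - {{x, y}})) v = Suc (degree T v)"
      using s moves_to_exchange(3)[OF s(2) v s(3)] finite_tree_edges[OF fin s(2)]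
      by (intro degree_exchange) (auto simp: moves_to_def)
    then show "(case s of (T, p) \<Rightarrow> h (degree T v)) = (\<lambda>(T, p). h (degree T v - 1)) (?f s)"
      using s(1) by simp
  qed
  also have "\<dots> = (\<Sum>(T, p) \<in> (SIGMA T:?Tr. moves_from V T v). h (degree T v - 1))"
    by (rule sum.reindex_bij_betw[OF bij_betw_moves[OF v]])
  also have "\<dots> = (\<Sum>T\<in>?Tr. card (moves_from V T v) * h (degree T v - 1))"
    using finite_trees[OF fin] fin_moves by (simp add: sum.Sigma[symmetric])
  finally show ?thesis by simp
qed

lemma tree_degree_pos:
  assumes T: "is_tree V T" and "finite V" "v \<in> V" "x \<in> V" "x \<noteq> v"
  shows "0 < degree T v"
proof -
  obtain y where "{v, y} \<in> T" using tree_neighbour_towards[OF assms(1,3-5)] by blast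
  then have "{e \<in> T. v \<in> e} \<noteq> {}" by blast
  moreover have "finite {e \<in> T. v \<in> e}" using finite_tree_edges[OF \<open>finite V\<close> T] by simp
  ultimately show ?thesis unfolding degree_def by (simp add: card_gt_0_iff)
qed

lemma sum_degree_shift:
  fixes f :: "real \<Rightarrow> real"
  assumes fin: "finite V" and v: "v \<in> V"
  shows "(\<Sum>T | is_tree V T. (real (card V) - 1 - real (degree T v)) * f (real (degree T v)))
       = (\<Sum>T | is_tree V T.
            (real (card V) - 1) * (real (degree T v) - 1) * f (real (degree T v) - 1))"
proof -
  have "(\<Sum>T | is_tree V T. (real (card V) - 1 - real (degree T v)) * f (real (degree T v)))
      = (\<Sum>T | is_tree V T. card (moves_to T v) * (f \<circ> real) (degree T v))"
  proof (rule sum.cong[OF refl])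
    fix T assume "T \<in> {T. is_tree V T}"
    then have "card (moves_to T v) + degree T v + 1 = card V" using card_moves_to[OF _ fin v] by simp
    then have "real (card (moves_to T v)) = real (card V) - 1 - degree T v" by linarith
    then show "(real (card V) - 1 - real (degree T v)) * f (real (degree T v))
        = card (moves_to T v) * (f \<circ> real) (degree T v)" by simp
  qed
  also have "\<dots> = (\<Sum>T | is_tree V T. card (moves_from V T v) * (f \<circ> real) (degree T v - 1))"
    by (rule sum_moves_to_eq_sum_moves_from[OF fin v])
  also have "\<dots> = (\<Sum>T | is_tree V T.
      (real (card V) - 1) * (real (degree T v) - 1) * f (real (degree T v) - 1))"
  proof (rule sum.cong[OF refl])
    fix T assume "T \<in> {T. is_tree V T}"
    then have T: "is_tree V T" by simp
    have card: "card (moves_from V T v) = (card V - 1) * (degree T v - 1)"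
      by (rule card_moves_from[OF T fin v])
    show "card (moves_from V T v) * (f \<circ> real) (degree T v - 1)
        = (real (card V) - 1) * (real (degree T v) - 1) * f (real (degree T v) - 1)"
    proof (cases "V = {v}")
      case False
      then obtain x where "x \<in> V" "x \<noteq> v" using v by blast
      then have "0 < degree T v" by (rule tree_degree_pos[OF T fin v])
      moreover have "0 < card V" using fin v card_gt_0_iff by blast
      ultimately show ?thesis using card by (simp add: of_nat_diff)
    qed (use card in simp)
  qed
  finally show ?thesis .
qed

lemma sum_degree_squared:
  assumes "finite V" "v \<in> V"
  shows "(\<Sum>T | is_tree V T. real (degree T v) ^ 2)
       = card {T. is_tree V T} * ((real (card V) - 1) * (5 * real (card V) - 6) / real (card V) ^ 2)"
proof -
  let ?Tr = "{T. is_tree V T}"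
  let ?d = "\<lambda>T. real (degree T v)"
  let ?m = "real (card V)"
  let ?A1 = "\<lambda>T. (?m - 1 - ?d T) - (?m - 1) * (?d T - 1)"
  let ?A2 = "\<lambda>T. (?m - 1 - ?d T) * (?d T - 1) - (?m - 1) * (?d T - 1) * (?d T - 1 - 1)"
  have "sum ?A1 ?Tr = 0" using sum_degree_shift[OF assms, of "\<lambda>_. 1"] by (simp add: sum_subtractf)
  moreover have "sum ?A2 ?Tr = 0" using sum_degree_shift[OF assms, of "\<lambda>x. x - 1"] by (simp add: sum_subtractf)
  moreover have "?m ^ 2 * ?d T ^ 2 - (?m - 1) * (5 * ?m - 6) = - (4 * ?m - 3) * ?A1 T - ?m * ?A2 T" for T
    by (simp add: algebra_simps power2_eq_square)
  ultimately have "(\<Sum>T\<in>?Tr. ?m ^ 2 * ?d T ^ 2 - (?m - 1) * (5 * ?m - 6)) = 0"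
    by (simp add: sum_subtractf sum_distrib_left[symmetric])
  then have "?m ^ 2 * (\<Sum>T\<in>?Tr. ?d T ^ 2) = card ?Tr * ((?m - 1) * (5 * ?m - 6))"
    by (simp add: sum_subtractf sum_distrib_left)
  moreover have "?m > 0" using assms by (auto simp: card_gt_0_iff)
  ultimately show ?thesis by (simp add: field_simps)
qed

lemma sum_E0C_labeled_trees:
  assumes "1 \<le> n"
  shows "(\<Sum>T\<in>labeled_trees n. E0C n T)
       = card (labeled_trees n) * (1/6 * (real n - 1) * (real n - 5 + 6 / real n))"
proof -
  let ?N = "real (card (labeled_trees n))"
  have E0C: "E0C n T = real n * (real n - 1) / 6 - (\<Sum>i = 1..n. real (degree T i) ^ 2) / 6" for T
    using assms unfolding E0C_def second_moment_degree_def by (simp add: field_simps)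
  have "(\<Sum>T\<in>labeled_trees n. \<Sum>i = 1..n. real (degree T i) ^ 2)
      = (\<Sum>i = 1..n. \<Sum>T\<in>labeled_trees n. real (degree T i) ^ 2)" by (rule sum.swap)
  also have "\<dots> = real n * (?N * ((real n - 1) * (5 * real n - 6) / real n ^ 2))"
    using sum_degree_squared[of "{1..n}"] unfolding labeled_trees_def by simp
  finally have squares: "(\<Sum>T\<in>labeled_trees n. \<Sum>i = 1..n. real (degree T i) ^ 2)
      = ?N * ((real n - 1) * (5 * real n - 6) / real n)"
    using assms by (simp add: power2_eq_square)
  have "(\<Sum>T\<in>labeled_trees n. E0C n T)
      = ?N * (real n * (real n - 1) / 6)
        - (\<Sum>T\<in>labeled_trees n. \<Sum>i = 1..n. real (degree T i) ^ 2) / 6"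
    unfolding E0C by (simp add: sum_subtractf sum_divide_distrib)
  also have "\<dots> = ?N * (1/6 * (real n - 1) * (real n - 5 + 6 / real n))"
    unfolding squares using assms by (simp add: field_simps)
  finally show ?thesis .
qed

theorem proposition1:
  fixes n :: nat
  assumes "n \<ge> 1"
  shows "(\<Sum>T\<in>labeled_trees n. E0C n T) / real (card (labeled_trees n))
           = 1/6 * (real n - 1) * (real n - 5 + 6 / real n)
       \<and> (\<Sum>T\<in>labeled_trees n. E0C n T) / real (card (labeled_trees n))
           = (real n)^2 / 6 - real n + 11/6 - 1 / real n"
proof -
  have "labeled_trees n \<noteq> {}" "finite (labeled_trees n)"
    using star_is_tree[OF assms] finite_trees[of "{1..n}"] unfolding labeled_trees_def by auto
  then have "(\<Sum>T\<in>labeled_trees n. E0C n T) / real (card (labeled_trees n))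
      = 1/6 * (real n - 1) * (real n - 5 + 6 / real n)"
    using sum_E0C_labeled_trees[OF assms] by simp
  then show ?thesis using assms by (simp add: field_simps power2_eq_square)
qed

end
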